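(* Let $\alpha=(A_0\leftarrow\cdots\leftarrow A_m)$ and $\beta=(B_0\leftarrow\cdots\leftarrow B_n)$ be universal evolutions for vertices $A_m$ and $B_n$, respectively, of a monotonous quiver, and suppose $A_m\le B_n$. If $m=n\ge1$, then $A_{m-1}\sim B_{n-1}$. If $m<n$, then $A_m\le B_{n-1}$.
   Context: A quiver consists of a class of vertices and, for each ordered pair of vertices $(A,B)$, a set of edges $A\to B$ (loops and multiple edges allowed). An evolution of length $m\ge 0$ is a sequence $A_0\leftarrow A_1\leftarrow\cdots\leftarrow A_m$ of vertices together with edges $A_k\to A_{k-1}$ ($1\le k\le m$); $A_0$ is its initial and $A_m$ its terminal vertex. Write $A\le B$ ($A$ is an ancestor of $B$) if there is an evolution with initial vertex $A$ and terminal vertex $B$; $A,B$ are isotypic ($A\sim B$) if $A\le B$ and $B\le A$. A vertex $A$ is primitive if every ancestor of $A$ is isotypic to $A$. A full evolution for $X$ is an evolution with primitive initial vertex and terminal vertex $X$. The height $h(X)$ is the smallest length of a full evolution for $X$ ($\infty$ if none). An evolution $\alpha=(A_0\leftarrow\cdots\leftarrow A_m)$ embeds in $\beta=(B_0\leftarrow\cdots\leftarrow B_n)$ if $m\le n$ and there are $0\le r_0<\cdots<r_m\le n$ with $A_k\sim B_{r_k}$. A universal evolution for $X$ is a full evolution for $X$ embedding in every full evolution for $X$. A quiver is monotonous if $h(A)\ge h(B)$ for every edge $A\to B$. *)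

theory Defs
  imports Main "HOL-Library.Extended_Nat"
begin

(* A quiver on vertex type 'v is represented by the predicate E, where
   E A B means: there is (at least one) edge A \<rightarrow> B. *)

definition is_evol :: "('v \<Rightarrow> 'v \<Rightarrow> bool) \<Rightarrow> 'v list \<Rightarrow> bool" where
  "is_evol E xs \<longleftrightarrow> xs \<noteq> [] \<and> (\<forall>k. 1 \<le> k \<and> k < length xs \<longrightarrow> E (xs ! k) (xs ! (k - 1)))"

definition evol_len :: "'v list \<Rightarrow> nat" where
  "evol_len xs = length xs - 1"

definition ancestor :: "('v \<Rightarrow> 'v \<Rightarrow> bool) \<Rightarrow> 'v \<Rightarrow> 'v \<Rightarrow> bool" where
  "ancestor E A B \<longleftrightarrow> (\<exists>xs. is_evol E xs \<and> hd xs = A \<and> last xs = B)"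

definition isotypic :: "('v \<Rightarrow> 'v \<Rightarrow> bool) \<Rightarrow> 'v \<Rightarrow> 'v \<Rightarrow> bool" where
  "isotypic E A B \<longleftrightarrow> ancestor E A B \<and> ancestor E B A"

definition primitive :: "('v \<Rightarrow> 'v \<Rightarrow> bool) \<Rightarrow> 'v \<Rightarrow> bool" where
  "primitive E A \<longleftrightarrow> (\<forall>B. ancestor E B A \<longrightarrow> isotypic E B A)"

definition full_evol :: "('v \<Rightarrow> 'v \<Rightarrow> bool) \<Rightarrow> 'v \<Rightarrow> 'v list \<Rightarrow> bool" where
  "full_evol E X xs \<longleftrightarrow> is_evol E xs \<and> primitive E (hd xs) \<and> last xs = X"

definition height :: "('v \<Rightarrow> 'v \<Rightarrow> bool) \<Rightarrow> 'v \<Rightarrow> enat" where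
  "height E X = (INF xs \<in> {xs. full_evol E X xs}. enat (evol_len xs))"

definition embeds :: "('v \<Rightarrow> 'v \<Rightarrow> bool) \<Rightarrow> 'v list \<Rightarrow> 'v list \<Rightarrow> bool" where
  "embeds E xs ys \<longleftrightarrow> evol_len xs \<le> evol_len ys \<and>
     (\<exists>r :: nat \<Rightarrow> nat. (\<forall>k < length xs. r k < length ys \<and> isotypic E (xs ! k) (ys ! (r k))) \<and>
        (\<forall>i j. i < j \<and> j < length xs \<longrightarrow> r i < r j))"

definition universal_evol :: "('v \<Rightarrow> 'v \<Rightarrow> bool) \<Rightarrow> 'v \<Rightarrow> 'v list \<Rightarrow> bool" where
  "universal_evol E X xs \<longleftrightarrow> full_evol E X xs \<and> (\<forall>ys. full_evol E X ys \<longrightarrow> embeds E xs ys)"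

definition monotonous :: "('v \<Rightarrow> 'v \<Rightarrow> bool) \<Rightarrow> bool" where
  "monotonous E \<longleftrightarrow> (\<forall>A B. E A B \<longrightarrow> height E A \<ge> height E B)"

end

theory Submission
  imports Defs
begin

(* Appending to alpha an evolution from A_m to B_n gives a full evolution for B_n, into which
   beta embeds; the embedding sends B_(n-1) to a vertex C of index at least n - 1.  If m < n, then C
   lies on the appended part and so descends from A_m.  If m = n and C lay on the appended part,
   monotonicity would give h(A_m) <= h(B_(n-1)) <= n - 1, whereas h(A_m) = m because alpha is
   universal; hence C = A_(m-1). *)

lemma is_evol_length: "is_evol E xs \<Longrightarrow> length xs = Suc (evol_len xs)"
  by (cases xs) (auto simp: is_evol_def evol_len_def)

lemma is_evol_take:
  assumes "is_evol E xs" "i < length xs"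
  shows "is_evol E (take (Suc i) xs)" "hd (take (Suc i) xs) = hd xs"
    and "last (take (Suc i) xs) = xs ! i"
  using assms by (auto simp: is_evol_def hd_conv_nth last_conv_nth)

lemma ancestor_hd_nth: "is_evol E xs \<Longrightarrow> i < length xs \<Longrightarrow> ancestor E (hd xs) (xs ! i)"
  unfolding ancestor_def using is_evol_take by blast

lemma nth_append_tl:
  assumes "xs \<noteq> []" "last xs = hd ys" "length xs - 1 \<le> j" "j < length xs + length ys - 1"
  shows "(xs @ tl ys) ! j = ys ! (j - (length xs - 1))"
proof (cases "j < length xs")
  case True
  then have "j = length xs - 1" using assms(3) by auto
  with assms True show ?thesis by (cases ys) (auto simp: nth_append last_conv_nth)
next
  case False
  then have "j - (length xs - 1) = Suc (j - length xs)" using assms(1) by (cases xs) auto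
  with False assms(4) show ?thesis by (cases ys) (simp_all add: nth_append)
qed

lemma is_evol_append_tl:
  assumes xs: "is_evol E xs" and ys: "is_evol E ys" and joint: "last xs = hd ys"
  shows "is_evol E (xs @ tl ys)" "hd (xs @ tl ys) = hd xs" "last (xs @ tl ys) = last ys"
proof -
  have "xs \<noteq> []" "ys \<noteq> []" using xs ys by (auto simp: is_evol_def)
  then show "hd (xs @ tl ys) = hd xs" "last (xs @ tl ys) = last ys"
    using joint by (cases ys; auto)+
  let ?zs = "xs @ tl ys" and ?o = "length xs - 1"
  have "E (?zs ! k) (?zs ! (k - 1))" if k: "1 \<le> k" "k < length ?zs" for k
  proof (cases "k < length xs")
    case True
    then have "k - 1 < length xs" by simp
    with True show ?thesis using xs k by (simp add: nth_append is_evol_def)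
  next
    case False
    then have "?zs ! k = ys ! (k - ?o)" "?zs ! (k - 1) = ys ! (k - ?o - 1)"
      using nth_append_tl[OF \<open>xs \<noteq> []\<close> joint] k by (simp_all add: Suc_diff_le)
    moreover have "1 \<le> k - ?o" "k - ?o < length ys" using False k by auto
    with ys have "E (ys ! (k - ?o)) (ys ! (k - ?o - 1))" unfolding is_evol_def by blast
    ultimately show ?thesis by simp
  qed
  with \<open>xs \<noteq> []\<close> show "is_evol E ?zs" by (simp add: is_evol_def)
qed

lemma ancestor_trans: "ancestor E A B \<Longrightarrow> ancestor E B C \<Longrightarrow> ancestor E A C"
  unfolding ancestor_def by (metis is_evol_append_tl)

lemma height_le_evol_len: "full_evol E X xs \<Longrightarrow> height E X \<le> enat (evol_len xs)"
  unfolding height_def by (rule INF_lower) simp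

lemma height_nth_le:
  assumes "full_evol E X xs" "i < length xs"
  shows "height E (xs ! i) \<le> enat i"
proof -
  have "full_evol E (xs ! i) (take (Suc i) xs)"
    using assms is_evol_take[of E xs i] by (simp add: full_evol_def)
  then show ?thesis
    using height_le_evol_len assms(2) by (fastforce simp: evol_len_def)
qed

lemma height_universal_evol: "universal_evol E X xs \<Longrightarrow> height E X = enat (evol_len xs)"
  unfolding universal_evol_def
  by (auto simp: height_def embeds_def intro!: antisym INF_greatest INF_lower)

lemma height_mono_along_evol:
  assumes "monotonous E" "is_evol E xs" "i < length xs"
  shows "height E (hd xs) \<le> height E (xs ! i)"
  using assms(3)
proof (induction i)
  case 0
  then show ?case using assms(2) by (simp add: hd_conv_nth is_evol_def)
next
  case (Suc i)
  then have "E (xs ! Suc i) (xs ! i)" using assms(2) by (auto simp: is_evol_def)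
  with assms(1) Suc show ?case by (force simp: monotonous_def)
qed

lemma height_mono_ancestor:
  assumes mono: "monotonous E" and "ancestor E A B"
  shows "height E A \<le> height E B"
proof -
  obtain xs where xs: "is_evol E xs" "hd xs = A" "last xs = B"
    using \<open>ancestor E A B\<close> unfolding ancestor_def by blast
  then have "last xs = xs ! (length xs - 1)" "length xs - 1 < length xs"
    by (auto simp: is_evol_def last_conv_nth)
  with height_mono_along_evol[OF mono xs(1)] xs show ?thesis by metis
qed

lemma height_isotypic: "monotonous E \<Longrightarrow> isotypic E A B \<Longrightarrow> height E A = height E B"
  unfolding isotypic_def by (metis height_mono_ancestor antisym)

lemma strict_mono_below_ge:
  assumes "\<forall>i j. i < j \<and> j < n \<longrightarrow> r i < (r j :: nat)" "k < n"
  shows "k \<le> r k"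
  using assms(2)
proof (induction k)
  case (Suc k)
  then have "r k < r (Suc k)" using assms(1) by blast
  with Suc show ?case by simp
qed simp

lemma embeds_nth_isotypic:
  assumes "embeds E xs ys" "k < length xs"
  obtains j where "k \<le> j" "j < length ys" "isotypic E (xs ! k) (ys ! j)"
  using assms strict_mono_below_ge unfolding embeds_def by metis

lemma universal_evol_nth_isotypic_cases:
  assumes xs: "full_evol E X xs" and anc: "ancestor E X Y"
    and ys: "universal_evol E Y ys" and k: "k < length ys"
  obtains j where "k \<le> j" "j < evol_len xs" "isotypic E (ys ! k) (xs ! j)"
  | C where "ancestor E X C" "isotypic E (ys ! k) C"
proof -
  obtain ps where ps: "is_evol E ps" "hd ps = X" "last ps = Y"
    using anc unfolding ancestor_def by blast
  have evol_xs: "is_evol E xs" and last_xs: "last xs = hd ps"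
    using xs ps(2) by (auto simp: full_evol_def)
  then have "xs \<noteq> []" by (simp add: is_evol_def)
  let ?zs = "xs @ tl ps"
  have "full_evol E Y ?zs"
    using is_evol_append_tl[OF evol_xs ps(1) last_xs] xs ps(3) by (simp add: full_evol_def)
  then obtain j where j: "k \<le> j" "j < length ?zs" "isotypic E (ys ! k) (?zs ! j)"
    using ys k embeds_nth_isotypic unfolding universal_evol_def by metis
  have len_xs: "length xs = Suc (evol_len xs)" using evol_xs by (rule is_evol_length)
  show thesis
  proof (cases "j < evol_len xs")
    case True
    then show thesis using that(1) j len_xs by (simp add: nth_append)
  next
    case False
    have "length ?zs = length xs + length ps - 1" using ps(1) by (cases ps) (auto simp: is_evol_def)
    then have "?zs ! j = ps ! (j - evol_len xs)" "j - evol_len xs < length ps"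
      using nth_append_tl[OF \<open>xs \<noteq> []\<close> last_xs] False j(2) len_xs by auto
    then have "ancestor E X (?zs ! j)" using ancestor_hd_nth[OF ps(1)] ps(2) by metis
    then show thesis using that(2) j(3) by blast
  qed
qed

lemma universal_evol_ancestor_penultimate:
  assumes xs: "universal_evol E X xs" and ys: "universal_evol E Y ys" and anc: "ancestor E X Y"
    and len: "evol_len xs < evol_len ys"
  shows "ancestor E X (ys ! (evol_len ys - 1))"
proof -
  have k: "evol_len ys - 1 < length ys"
    using ys is_evol_length by (fastforce simp: universal_evol_def full_evol_def)
  have full_xs: "full_evol E X xs" using xs by (simp add: universal_evol_def)
  from full_xs anc ys k show ?thesis
  proof (cases rule: universal_evol_nth_isotypic_cases)
    case (1 j)
    then show ?thesis using len by simp
  next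
    case (2 C)
    then show ?thesis by (meson ancestor_trans isotypic_def)
  qed
qed

lemma universal_evol_isotypic_penultimate:
  assumes mono: "monotonous E" and xs: "universal_evol E X xs" and ys: "universal_evol E Y ys"
    and anc: "ancestor E X Y" and len: "evol_len xs = evol_len ys" "evol_len ys \<ge> 1"
  shows "isotypic E (xs ! (evol_len xs - 1)) (ys ! (evol_len ys - 1))"
proof -
  let ?k = "evol_len ys - 1"
  have k: "?k < length ys"
    using ys is_evol_length by (fastforce simp: universal_evol_def full_evol_def)
  have full_xs: "full_evol E X xs" using xs by (simp add: universal_evol_def)
  from full_xs anc ys k show ?thesis
  proof (cases rule: universal_evol_nth_isotypic_cases)
    case (1 j)
    then have "j = ?k" using len by simp
    with 1 show ?thesis using len by (simp add: isotypic_def)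
  next
    case (2 C)
    have "height E X \<le> height E (ys ! ?k)"
      using 2 height_mono_ancestor height_isotypic mono by metis
    also have "\<dots> \<le> enat ?k"
      using height_nth_le[OF _ k] ys unfolding universal_evol_def by blast
    finally show ?thesis using height_universal_evol[OF xs] len by simp
  qed
qed

theorem lemma7p2:
  fixes E :: "'v \<Rightarrow> 'v \<Rightarrow> bool" and As Bs :: "'v list" and m n :: nat
  assumes "monotonous E"
    and "universal_evol E (last As) As"
    and "universal_evol E (last Bs) Bs"
    and "evol_len As = m" and "evol_len Bs = n"
    and "ancestor E (last As) (last Bs)"
  shows "(m = n \<and> m \<ge> 1 \<longrightarrow> isotypic E (As ! (m - 1)) (Bs ! (n - 1)))
       \<and> (m < n \<longrightarrow> ancestor E (last As) (Bs ! (n - 1)))"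
  using universal_evol_isotypic_penultimate[OF assms(1-3,6)]
    universal_evol_ancestor_penultimate[OF assms(2,3,6)]
  unfolding assms(4,5) by blast

end
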